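(* Let $A\in\mathbb{R}^{m\times n}$ be semi-monotone (i.e. $A^{\dagger}\geq 0$). Let $A=B-C$ be a proper weak regular splitting and $A=U-V$ a proper regular splitting of $A$. If $B^{\dagger}\geq U^{\dagger}$ and all row sums of $U^{\dagger}$ are positive, then $$\rho(B^{\dagger}C)\leq \rho(U^{\dagger}V)<1.$$
   Context: All matrices are real. $X^{\dagger}$ denotes the Moore–Penrose inverse of $X$, and $\rho(\cdot)$ the spectral radius. For a matrix $X$, $X\geq 0$ means that all entries of $X$ are nonnegative and at least one entry is positive; $X\geq Y$ means $X-Y\geq 0$. $R(X)$ and $N(X)$ denote range and null space. A splitting $A=U-V$ is proper if $R(U)=R(A)$ and $N(U)=N(A)$. It is a proper regular splitting if it is proper, $U^{\dagger}\geq 0$ and $V\geq 0$; it is a proper weak regular splitting if it is proper, $U^{\dagger}\geq 0$ and $U^{\dagger}V\geq 0$. *)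

theory Defs
  imports "HOL-Analysis.Analysis"
begin

text \<open>Real m x n matrices are rendered as real^'n^'m (rows indexed by 'm).\<close>

definition moore_penrose :: "real^'n^'m \<Rightarrow> real^'m^'n" where
  "moore_penrose A = (THE X. A ** X ** A = A \<and> X ** A ** X = X \<and>
      transpose (A ** X) = A ** X \<and> transpose (X ** A) = X ** A)"

definition mat_nonneg :: "real^'n^'m \<Rightarrow> bool" where
  "mat_nonneg X \<longleftrightarrow> (\<forall>i j. X$i$j \<ge> 0) \<and> (\<exists>i j. X$i$j > 0)"

definition mat_ge :: "real^'n^'m \<Rightarrow> real^'n^'m \<Rightarrow> bool" where
  "mat_ge X Y \<longleftrightarrow> mat_nonneg (X - Y)"

definition mat_range :: "real^'n^'m \<Rightarrow> (real^'m) set" where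
  "mat_range A = range (\<lambda>x. A *v x)"

definition mat_null :: "real^'n^'m \<Rightarrow> (real^'n) set" where
  "mat_null A = {x. A *v x = 0}"

definition proper_splitting :: "real^'n^'m \<Rightarrow> real^'n^'m \<Rightarrow> real^'n^'m \<Rightarrow> bool" where
  "proper_splitting A U V \<longleftrightarrow> A = U - V \<and> mat_range U = mat_range A \<and> mat_null U = mat_null A"

definition proper_regular_splitting :: "real^'n^'m \<Rightarrow> real^'n^'m \<Rightarrow> real^'n^'m \<Rightarrow> bool" where
  "proper_regular_splitting A U V \<longleftrightarrow>
     proper_splitting A U V \<and> mat_nonneg (moore_penrose U) \<and> mat_nonneg V"

definition proper_weak_regular_splitting :: "real^'n^'m \<Rightarrow> real^'n^'m \<Rightarrow> real^'n^'m \<Rightarrow> bool" where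
  "proper_weak_regular_splitting A U V \<longleftrightarrow>
     proper_splitting A U V \<and> mat_nonneg (moore_penrose U) \<and> mat_nonneg (moore_penrose U ** V)"

definition complexify :: "real^'n^'m \<Rightarrow> complex^'n^'m" where
  "complexify M = (\<chi> i j. complex_of_real (M$i$j))"

definition spectral_radius :: "real^'n^'n \<Rightarrow> real" where
  "spectral_radius M = Max {cmod l | l. \<exists>v. v \<noteq> 0 \<and> complexify M *v v = l *s v}"

end

theory Submission
  imports Defs "Jordan_Normal_Form.Spectral_Radius"
begin

text \<open>Both inequalities are Collatz--Wielandt estimates for the nonnegative matrices
  \<open>B\<^sup>\<dagger>C\<close> and \<open>U\<^sup>\<dagger>V\<close>, driven by the identities
  \<open>A\<^sup>\<dagger> = U\<^sup>\<dagger> + U\<^sup>\<dagger>V A\<^sup>\<dagger> = U\<^sup>\<dagger> + A\<^sup>\<dagger>V U\<^sup>\<dagger>\<close> and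
  \<open>A\<^sup>\<dagger> = B\<^sup>\<dagger> + B\<^sup>\<dagger>C A\<^sup>\<dagger>\<close> of proper splittings.
  The vector \<open>A\<^sup>\<dagger>\<one>\<close> is strictly shrunk by \<open>U\<^sup>\<dagger>V\<close>, because \<open>U\<^sup>\<dagger>\<one> > 0\<close>;
  hence \<open>\<rho>(U\<^sup>\<dagger>V) < 1\<close>. For the comparison, the moduli of a left eigenvector of \<open>B\<^sup>\<dagger>C\<close>
  give \<open>y \<ge> 0\<close> with \<open>\<rho>(B\<^sup>\<dagger>C) y \<le> y B\<^sup>\<dagger>C\<close>; using \<open>U\<^sup>\<dagger> \<le> B\<^sup>\<dagger>\<close> the
  identities carry it to \<open>z = y A\<^sup>\<dagger>\<close> with \<open>\<rho>(B\<^sup>\<dagger>C) z \<le> z V U\<^sup>\<dagger>\<close> and then to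
  \<open>w = z V\<close> with \<open>\<rho>(B\<^sup>\<dagger>C) w \<le> w U\<^sup>\<dagger>V\<close>. Such a nonnegative sub-invariant
  vector bounds the spectral radius from below: otherwise suitably rescaled powers of
  \<open>U\<^sup>\<dagger>V\<close> would be bounded and grow geometrically along \<open>w\<close>.\<close>

no_notation Matrix.vec_index (infixl \<open>$\<close> 100)
hide_const (open) Matrix.orthogonal Spectral_Radius.spectral_radius
hide_fact (open) Matrix.less_eq_vec_def Matrix.vec_eq_iff

section \<open>Moore--Penrose inverses\<close>

definition is_moore_penrose_inverse :: "real^'n^'m \<Rightarrow> real^'m^'n \<Rightarrow> bool" where
  "is_moore_penrose_inverse A X \<longleftrightarrow> A ** X ** A = A \<and> X ** A ** X = X \<and>
      transpose (A ** X) = A ** X \<and> transpose (X ** A) = X ** A"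

lemma moore_penrose_inverse_unique:
  assumes "is_moore_penrose_inverse A X" "is_moore_penrose_inverse A Y"
  shows "X = Y"
proof -
  have a1: "A ** X ** A = A" and a2: "X ** A ** X = X"
    and a3: "transpose (A ** X) = A ** X" and a4: "transpose (X ** A) = X ** A"
    and b1: "A ** Y ** A = A" and b2: "Y ** A ** Y = Y"
    and b3: "transpose (A ** Y) = A ** Y" and b4: "transpose (Y ** A) = Y ** A"
    using assms unfolding is_moore_penrose_inverse_def by auto
  have "X = X ** transpose (A ** X)"
    using a2 a3 by (simp add: matrix_mul_assoc)
  also have "\<dots> = X ** transpose (A ** Y ** A ** X)"
    using b1 by simp
  also have "\<dots> = X ** transpose (A ** X) ** transpose (A ** Y)"
    by (simp add: matrix_transpose_mul matrix_mul_assoc)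
  also have "\<dots> = X ** A ** Y"
    using a2 a3 b3 by (simp add: matrix_mul_assoc)
  finally have X: "X = X ** A ** Y" .
  have "Y = transpose (Y ** A) ** Y"
    using b2 b4 by simp
  also have "\<dots> = transpose (Y ** (A ** X ** A)) ** Y"
    using a1 by (simp add: matrix_mul_assoc)
  also have "\<dots> = transpose (X ** A) ** transpose (Y ** A) ** Y"
    by (simp add: matrix_transpose_mul matrix_mul_assoc)
  also have "\<dots> = X ** A ** (Y ** A ** Y)"
    using a4 b4 by (simp add: matrix_mul_assoc)
  finally show ?thesis using X b2 by simp
qed

text \<open>Existence is reduced to the solvability of the normal equations
  \<open>A\<^sup>T A w = A\<^sup>T z\<close>: decompose \<open>z\<close> orthogonally along the range of \<open>A\<close>.\<close>

lemma normal_equation_solvable: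
  fixes A :: "real^'n^'m"
  shows "\<exists>w. transpose A *v (A *v w) = transpose A *v z"
proof -
  let ?R = "range (\<lambda>w. A *v w)"
  have "Real_Vector_Spaces.subspace ?R"
    by (metis linear_subspace_image matrix_vector_mul_linear subspace_UNIV)
  then have span_R: "Real_Vector_Spaces.span ?R = ?R"
    by (rule span_eq_iff[THEN iffD2])
  obtain y r where y: "y \<in> Real_Vector_Spaces.span ?R"
    and r: "\<And>x. x \<in> Real_Vector_Spaces.span ?R \<Longrightarrow> orthogonal r x" and z: "z = y + r"
    using orthogonal_subspace_decomp_exists[of ?R z] by metis
  obtain w where w: "y = A *v w" using y span_R by auto
  have "(transpose A *v r) $ j = 0" for j
  proof -
    have "orthogonal r (A *v axis j 1)" by (rule r) (auto intro: span_base)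
    then have "r \<bullet> (A *v axis j 1) = 0" by (simp add: real_inner_class.orthogonal_def)
    then show ?thesis
      by (simp add: matrix_vector_mult_def transpose_def inner_vec_def axis_def
          mult.commute if_distrib cong: if_cong)
  qed
  then have "transpose A *v r = 0" by (simp add: vec_eq_iff)
  then show ?thesis using z w by (auto simp: matrix_vector_right_distrib)
qed

lemma matrix_equation_solvable:
  fixes M :: "real^'n^'m" and N :: "real^'p^'m"
  assumes "\<And>z. \<exists>w. M *v w = N *v z"
  shows "\<exists>G. M ** G = N"
proof -
  have "\<forall>j. \<exists>w. M *v w = N *v axis j 1" using assms by blast
  from choice[OF this] obtain w where w: "\<And>j. M *v w j = N *v axis j 1"
    by blast
  have "M ** (\<chi> i j. w j $ i) = N"
  proof -
    have "(M ** (\<chi> i j. w j $ i)) $ i $ j = N $ i $ j" for i j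
    proof -
      have "(M ** (\<chi> i j. w j $ i)) $ i $ j = (M *v w j) $ i"
        by (simp add: matrix_matrix_mult_def matrix_vector_mult_def)
      also have "\<dots> = (N *v axis j 1) $ i"
        by (simp only: w)
      also have "\<dots> = N $ i $ j"
        by (simp add: matrix_vector_mult_def axis_def if_distrib cong: if_cong)
      finally show ?thesis .
    qed
    then show ?thesis by (simp add: vec_eq_iff)
  qed
  then show ?thesis ..
qed

lemma orthogonal_projection_onto_range:
  fixes A :: "real^'n^'m"
  assumes "transpose A ** A ** G = transpose A"
  shows "transpose (A ** G) = A ** G" "A ** G ** (A ** G) = A ** G" "A ** G ** A = A"
proof -
  let ?P = "A ** G"
  have "transpose ?P ** ?P = transpose G ** (transpose A ** A ** G)"
    by (simp add: matrix_transpose_mul matrix_mul_assoc)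
  also have "\<dots> = transpose ?P"
    using assms by (simp add: matrix_transpose_mul)
  finally have PP: "transpose ?P ** ?P = transpose ?P" .
  have "?P = transpose (transpose ?P ** ?P)"
    by (simp only: PP Finite_Cartesian_Product.transpose_transpose)
  also have "\<dots> = transpose ?P ** ?P"
    by (simp only: matrix_transpose_mul[of "transpose ?P" ?P]
        Finite_Cartesian_Product.transpose_transpose)
  also have "\<dots> = transpose ?P"
    by (rule PP)
  finally show sym: "transpose ?P = ?P" by simp
  show "?P ** ?P = ?P" using PP sym by simp
  have "transpose (transpose A ** ?P) = A"
    using assms by (simp add: matrix_mul_assoc)
  then show "?P ** A = A" using sym by (simp add: matrix_transpose_mul)
qed

lemma orthogonal_projection_onto_range_exists:
  fixes A :: "real^'n^'m"
  obtains G where "transpose A ** A ** G = transpose A"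
proof -
  have "\<exists>G. (transpose A ** A) ** G = transpose A"
    using matrix_equation_solvable normal_equation_solvable
    by (metis matrix_vector_mul_assoc)
  then show ?thesis using that by blast
qed

text \<open>With \<open>A G\<close> and \<open>H\<^sup>T A\<close> the orthogonal projections onto the range and the row space
  of \<open>A\<close>, the Moore--Penrose inverse is \<open>H\<^sup>T A G\<close>.\<close>

lemma moore_penrose_inverse_exists: "\<exists>X. is_moore_penrose_inverse (A :: real^'n^'m) X"
proof -
  obtain G where G: "transpose A ** A ** G = transpose A"
    using orthogonal_projection_onto_range_exists by blast
  obtain H where H: "transpose (transpose A) ** transpose A ** H = transpose (transpose A)"
    using orthogonal_projection_onto_range_exists by blast
  note P = orthogonal_projection_onto_range[OF G]
  note Q = orthogonal_projection_onto_range[OF H,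
      unfolded Finite_Cartesian_Product.transpose_transpose]
  define Q where "Q = transpose H ** A"
  have QH: "Q = transpose A ** H"
    using Q(1) by (simp add: Q_def matrix_transpose_mul)
  have Q_sym: "transpose Q = Q" and Q_idem: "Q ** Q = Q"
    using Q(1,2) by (simp_all add: QH)
  have AQ: "A ** Q = A"
    using arg_cong[OF Q(3), of transpose] by (simp add: QH matrix_transpose_mul flip: Q_def)
  define X where "X = Q ** G"
  have AX: "A ** X = A ** G"
    by (simp add: X_def matrix_mul_assoc AQ)
  have "X ** A = transpose H ** (A ** G ** A)"
    by (simp add: X_def Q_def matrix_mul_assoc)
  then have XA: "X ** A = Q"
    by (simp add: P(3) Q_def)
  have "is_moore_penrose_inverse A X"
    unfolding is_moore_penrose_inverse_def
    using AX XA P(1,3) Q_sym Q_idem by (simp add: X_def matrix_mul_assoc)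
  then show ?thesis ..
qed

lemma is_moore_penrose_inverse_moore_penrose: "is_moore_penrose_inverse A (moore_penrose A)"
proof -
  obtain X where X: "is_moore_penrose_inverse A X"
    using moore_penrose_inverse_exists by blast
  have "moore_penrose A = X"
    unfolding moore_penrose_def
    by (rule the_equality)
      (use X moore_penrose_inverse_unique in \<open>auto simp: is_moore_penrose_inverse_def\<close>)
  then show ?thesis using X by simp
qed

lemma mult_moore_penrose_mult: "A ** moore_penrose A ** A = A"
  and moore_penrose_mult_moore_penrose: "moore_penrose A ** A ** moore_penrose A = moore_penrose A"
  and transpose_mult_moore_penrose: "transpose (A ** moore_penrose A) = A ** moore_penrose A"
  and transpose_moore_penrose_mult: "transpose (moore_penrose A ** A) = moore_penrose A ** A"
  using is_moore_penrose_inverse_moore_penrose[of A] unfolding is_moore_penrose_inverse_def by auto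

section \<open>Proper splittings\<close>

lemma matrix_diff_ldistrib: "(A :: 'a::ring_1^'n^'m) ** (B - C) = A ** B - A ** C"
  by (simp add: matrix_matrix_mult_def vec_eq_iff sum_subtractf
      right_diff_distrib)

lemma matrix_diff_rdistrib: "((A :: 'a::ring_1^'n^'m) - B) ** C = A ** C - B ** C"
  by (simp add: matrix_matrix_mult_def vec_eq_iff sum_subtractf
      left_diff_distrib)

lemma range_subset_imp_mult_moore_penrose_mult:
  fixes A :: "real^'n^'m" and U :: "real^'k^'m"
  assumes "mat_range A \<subseteq> mat_range U"
  shows "U ** moore_penrose U ** A = A"
proof -
  have "(U ** moore_penrose U ** A) *v x = A *v x" for x
  proof -
    obtain y where y: "A *v x = U *v y"
      using assms by (auto simp: mat_range_def)
    have "(U ** moore_penrose U ** A) *v x = (U ** moore_penrose U ** U) *v y"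
      by (simp add: y flip: matrix_vector_mul_assoc)
    then show ?thesis by (simp add: mult_moore_penrose_mult y)
  qed
  then show ?thesis by (simp add: matrix_eq)
qed

lemma null_subset_imp_mult_moore_penrose_mult:
  fixes A :: "real^'n^'m" and U :: "real^'n^'k"
  assumes "mat_null A \<subseteq> mat_null U"
  shows "U ** moore_penrose A ** A = U"
proof -
  have "(U ** moore_penrose A ** A) *v x = U *v x" for x
  proof -
    have "A *v (x - (moore_penrose A ** A) *v x) = 0"
      by (simp add: matrix_vector_mult_diff_distrib matrix_vector_mul_assoc matrix_mul_assoc
          mult_moore_penrose_mult)
    then have "U *v (x - (moore_penrose A ** A) *v x) = 0"
      using assms by (auto simp: mat_null_def)
    then show ?thesis
      by (simp add: matrix_vector_mult_diff_distrib matrix_vector_mul_assoc matrix_mul_assoc)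
  qed
  then show ?thesis by (simp add: matrix_eq)
qed

text \<open>Both products are orthogonal projections; equal ranges (null spaces) force equal
  projections.\<close>

lemma proper_splitting_mult_moore_penrose:
  assumes "proper_splitting A U V"
  shows "U ** moore_penrose U = A ** moore_penrose A"
proof -
  have "mat_range U = mat_range A"
    using assms by (simp add: proper_splitting_def)
  then have UA: "U ** moore_penrose U ** (A ** moore_penrose A) = A ** moore_penrose A"
    and AU: "A ** moore_penrose A ** (U ** moore_penrose U) = U ** moore_penrose U"
    using range_subset_imp_mult_moore_penrose_mult[of A U]
      range_subset_imp_mult_moore_penrose_mult[of U A]
    by (simp_all add: matrix_mul_assoc)
  have "U ** moore_penrose U = transpose (A ** moore_penrose A ** (U ** moore_penrose U))"
    by (simp only: AU transpose_mult_moore_penrose)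
  also have "\<dots> = U ** moore_penrose U ** (A ** moore_penrose A)"
    by (simp only: matrix_transpose_mul[of "A ** moore_penrose A"] transpose_mult_moore_penrose)
  finally show ?thesis using UA by simp
qed

lemma proper_splitting_moore_penrose_mult:
  assumes "proper_splitting A U V"
  shows "moore_penrose U ** U = moore_penrose A ** A"
proof -
  have "mat_null U = mat_null A"
    using assms by (simp add: proper_splitting_def)
  then have UA: "moore_penrose U ** U ** (moore_penrose A ** A) = moore_penrose U ** U"
    and AU: "moore_penrose A ** A ** (moore_penrose U ** U) = moore_penrose A ** A"
    using null_subset_imp_mult_moore_penrose_mult[of A U]
      null_subset_imp_mult_moore_penrose_mult[of U A]
    by (simp_all flip: matrix_mul_assoc)
  have "moore_penrose U ** U = transpose (moore_penrose U ** U ** (moore_penrose A ** A))"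
    by (simp only: UA transpose_moore_penrose_mult)
  also have "\<dots> = moore_penrose A ** A ** (moore_penrose U ** U)"
    by (simp only: matrix_transpose_mul[of "moore_penrose U ** U"] transpose_moore_penrose_mult)
  finally show ?thesis using AU by simp
qed

lemma proper_splitting_moore_penrose_eq_left:
  assumes "proper_splitting A U V"
  shows "moore_penrose A = moore_penrose U + moore_penrose U ** V ** moore_penrose A"
proof -
  have "moore_penrose U ** V ** moore_penrose A
      = moore_penrose U ** U ** moore_penrose A - moore_penrose U ** (A ** moore_penrose A)"
    using assms
    by (simp add: proper_splitting_def matrix_mul_assoc matrix_diff_ldistrib matrix_diff_rdistrib)
  also have "moore_penrose U ** U ** moore_penrose A = moore_penrose A"
    by (simp add: proper_splitting_moore_penrose_mult[OF assms] moore_penrose_mult_moore_penrose)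
  also have "moore_penrose U ** (A ** moore_penrose A) = moore_penrose U"
    using moore_penrose_mult_moore_penrose[of U]
    by (simp add: matrix_mul_assoc flip: proper_splitting_mult_moore_penrose[OF assms])
  finally show ?thesis by simp
qed

lemma proper_splitting_moore_penrose_eq_right:
  assumes "proper_splitting A U V"
  shows "moore_penrose A = moore_penrose U + moore_penrose A ** V ** moore_penrose U"
proof -
  have "moore_penrose A ** V ** moore_penrose U
      = moore_penrose A ** (U ** moore_penrose U) - moore_penrose A ** A ** moore_penrose U"
    using assms
    by (simp add: proper_splitting_def matrix_mul_assoc matrix_diff_ldistrib matrix_diff_rdistrib)
  also have "moore_penrose A ** (U ** moore_penrose U) = moore_penrose A"
    using moore_penrose_mult_moore_penrose[of A]
    by (simp add: proper_splitting_mult_moore_penrose[OF assms] matrix_mul_assoc)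
  also have "moore_penrose A ** A ** moore_penrose U = moore_penrose U"
    using moore_penrose_mult_moore_penrose[of U]
    by (simp flip: proper_splitting_moore_penrose_mult[OF assms])
  finally show ?thesis by simp
qed

section \<open>Eigenvalues and spectral radius of Cartesian matrices\<close>

primrec matpow :: "'a::semiring_1^'n^'n \<Rightarrow> nat \<Rightarrow> 'a^'n^'n" where
  "matpow M 0 = Finite_Cartesian_Product.mat 1"
| "matpow M (Suc k) = matpow M k ** M"

definition eigenvalues :: "'a::field^'n^'n \<Rightarrow> 'a set" where
  "eigenvalues M = {l. \<exists>v. v \<noteq> 0 \<and> M *v v = l *s v}"

text \<open>Facts about eigenvalues are imported from the Jordan normal form library by enumerating
  the finite index type.\<close>

definition cart_index :: "nat \<Rightarrow> 'n::finite" where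
  "cart_index = (SOME g. bij_betw g {0..<CARD('n)} UNIV)"

definition cart_position :: "'n::finite \<Rightarrow> nat" where
  "cart_position = inv_into {0..<CARD('n)} cart_index"

definition jnf_mat :: "'a^'n^'n \<Rightarrow> 'a mat" where
  "jnf_mat M = Matrix.mat CARD('n) CARD('n) (\<lambda>(i, j). M $ cart_index i $ cart_index j)"

definition jnf_vec :: "'a^'n \<Rightarrow> 'a Matrix.vec" where
  "jnf_vec v = Matrix.vec CARD('n) (\<lambda>i. v $ cart_index i)"

lemma bij_cart_index: "bij_betw (cart_index :: nat \<Rightarrow> 'n::finite) {0..<CARD('n)} UNIV"
proof -
  have "\<exists>g. bij_betw g {0..<CARD('n)} (UNIV :: 'n set)"
    by (rule ex_bij_betw_nat_finite) simp
  then show ?thesis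
    unfolding cart_index_def by (rule someI_ex)
qed

lemma cart_position_less: "cart_position (k :: 'n::finite) < CARD('n)"
  using bij_cart_index[where 'n='n] unfolding cart_position_def
  by (metis UNIV_I atLeastLessThan_iff bij_betw_def inv_into_into)

lemma cart_index_position [simp]: "cart_index (cart_position k) = (k :: 'n::finite)"
  using bij_cart_index[where 'n='n] unfolding cart_position_def
  by (simp add: bij_betw_def f_inv_into_f)

lemma cart_position_index [simp]: "i < CARD('n) \<Longrightarrow> cart_position (cart_index i :: 'n::finite) = i"
  using bij_cart_index[where 'n='n] unfolding cart_position_def
  by (simp add: bij_betw_def inv_into_f_f)

lemma sum_cart_index: "(\<Sum>k\<in>UNIV. f k) = (\<Sum>i = 0..<CARD('n::finite). f (cart_index i :: 'n))"
  using sum.reindex_bij_betw[OF bij_cart_index, of f] by simp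

lemma jnf_mat_carrier [simp]: "jnf_mat (M :: 'a^'n::finite^'n) \<in> carrier_mat CARD('n) CARD('n)"
  and dim_jnf_mat [simp]: "dim_row (jnf_mat M) = CARD('n)" "dim_col (jnf_mat M) = CARD('n)"
  by (simp_all add: jnf_mat_def)

lemma index_jnf_mat [simp]:
  "i < CARD('n) \<Longrightarrow> j < CARD('n) \<Longrightarrow>
    jnf_mat (M :: 'a^'n::finite^'n) $$ (i, j) = M $ cart_index i $ cart_index j"
  by (simp add: jnf_mat_def)

lemma dim_jnf_vec [simp]: "dim_vec (jnf_vec (v :: 'a^'n::finite)) = CARD('n)"
  by (simp add: jnf_vec_def)

lemma index_jnf_vec [simp]:
  "i < CARD('n) \<Longrightarrow> vec_index (jnf_vec (v :: 'a^'n::finite)) i = v $ cart_index i"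
  by (simp add: jnf_vec_def)

lemma jnf_mat_mult: "jnf_mat (M ** N) = jnf_mat M * jnf_mat (N :: 'a::comm_ring_1^'n::finite^'n)"
  by (rule eq_matI) (auto simp: scalar_prod_def matrix_matrix_mult_def sum_cart_index)

lemma jnf_mat_one:
  "jnf_mat (Finite_Cartesian_Product.mat 1 :: 'a::comm_ring_1^'n::finite^'n) = 1\<^sub>m CARD('n)"
  by (rule eq_matI)
    (auto simp: Finite_Cartesian_Product.mat_def dest: arg_cong[of _ _ cart_position])

lemma jnf_mat_matpow: "jnf_mat (matpow M k) = jnf_mat (M :: 'a::comm_ring_1^'n::finite^'n) ^\<^sub>m k"
  by (induction k) (simp_all add: jnf_mat_one jnf_mat_mult)

lemma jnf_mat_transpose: "jnf_mat (transpose M) = transpose_mat (jnf_mat M)"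
  by (rule eq_matI) (auto simp: transpose_def)

lemma jnf_mat_mult_jnf_vec:
  "jnf_mat M *\<^sub>v jnf_vec v = jnf_vec (M *v (v :: 'a::comm_ring_1^'n::finite))"
  by (rule eq_vecI) (auto simp: scalar_prod_def matrix_vector_mult_def sum_cart_index)

lemma jnf_vec_smult: "jnf_vec (c *s v) = c \<cdot>\<^sub>v jnf_vec v"
  by (rule eq_vecI) auto

lemma jnf_vec_inject: "jnf_vec v = jnf_vec w \<longleftrightarrow> v = (w :: 'a^'n::finite)"
proof
  assume "jnf_vec v = jnf_vec w"
  then have "vec_index (jnf_vec v) (cart_position k) = vec_index (jnf_vec w) (cart_position k)"
    for k :: 'n
    by simp
  then show "v = w"
    by (simp add: cart_position_less vec_eq_iff)
qed simp

lemma jnf_vec_zero: "jnf_vec (0 :: 'a::zero^'n::finite) = 0\<^sub>v CARD('n)"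
  by (rule eq_vecI) auto

lemma jnf_vec_surj:
  "w \<in> carrier_vec CARD('n::finite) \<Longrightarrow> w = jnf_vec (\<chi> k::'n. vec_index w (cart_position k))"
  by (rule eq_vecI) auto

lemma eigenvalues_eq_spectrum: "eigenvalues M = spectrum (jnf_mat (M :: 'a::field^'n::finite^'n))"
proof (intro Set.set_eqI iffI)
  fix l assume "l \<in> eigenvalues M"
  then obtain v where "v \<noteq> 0" "M *v v = l *s v"
    by (auto simp: eigenvalues_def)
  then have "eigenvector (jnf_mat M) (jnf_vec v) l"
    by (auto simp: eigenvector_def jnf_mat_mult_jnf_vec jnf_vec_smult carrier_vecI
        simp flip: jnf_vec_zero jnf_vec_inject)
  then show "l \<in> spectrum (jnf_mat M)"
    by (auto simp: spectrum_def eigenvalue_def)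
next
  fix l assume "l \<in> spectrum (jnf_mat M)"
  then obtain w where w: "eigenvector (jnf_mat M) w l"
    by (auto simp: spectrum_def eigenvalue_def)
  define v :: "'a^'n" where "v = (\<chi> k. vec_index w (cart_position k))"
  have wv: "w = jnf_vec v"
    using w jnf_vec_surj[where 'n='n] by (auto simp: v_def eigenvector_def)
  then have "v \<noteq> 0" "M *v v = l *s v"
    using w by (auto simp: eigenvector_def jnf_mat_mult_jnf_vec jnf_vec_smult
        simp flip: jnf_vec_zero jnf_vec_inject)
  then show "l \<in> eigenvalues M"
    by (auto simp: eigenvalues_def)
qed

lemma eigenvalues_transpose:
  "eigenvalues (transpose M) = eigenvalues (M :: 'a::field^'n::finite^'n)"
  using spectrum_root_char_poly[OF jnf_mat_carrier, of M]
    spectrum_root_char_poly[of "transpose_mat (jnf_mat M)" "CARD('n)"]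
    char_poly_transpose_mat[OF jnf_mat_carrier, of M]
  by (simp add: eigenvalues_eq_spectrum jnf_mat_transpose)

lemma finite_eigenvalues: "finite (eigenvalues M)"
  using card_finite_spectrum(1)[OF jnf_mat_carrier] by (simp add: eigenvalues_eq_spectrum)

lemma eigenvalues_nonempty: "eigenvalues (M :: complex^'n^'n) \<noteq> {}"
  using spectrum_non_empty[OF jnf_mat_carrier] by (simp add: eigenvalues_eq_spectrum)

lemma complexify_mult: "complexify (A ** B) = complexify A ** complexify B"
  by (simp add: complexify_def matrix_matrix_mult_def vec_eq_iff)

lemma complexify_one: "complexify (Finite_Cartesian_Product.mat 1) = Finite_Cartesian_Product.mat 1"
  by (simp add: complexify_def Finite_Cartesian_Product.mat_def vec_eq_iff)

lemma complexify_matpow: "complexify (matpow M k) = matpow (complexify M) k"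
  by (induction k) (simp_all add: complexify_mult complexify_one)

lemma complexify_transpose: "complexify (transpose M) = transpose (complexify M)"
  by (simp add: complexify_def transpose_def vec_eq_iff)

lemma spectral_radius_eq_Max: "spectral_radius M = Max (cmod ` eigenvalues (complexify M))"
  unfolding Defs.spectral_radius_def eigenvalues_def by (rule arg_cong[of _ _ Max]) auto

lemma spectral_radius_attained:
  obtains l where "l \<in> eigenvalues (complexify M)" "cmod l = spectral_radius M"
proof -
  have "Max (cmod ` eigenvalues (complexify M)) \<in> cmod ` eigenvalues (complexify M)"
    by (rule Max_in) (simp_all add: finite_eigenvalues eigenvalues_nonempty)
  then show ?thesis
    using that by (auto simp: spectral_radius_eq_Max)
qed

lemma spectral_radius_nonneg: "0 \<le> spectral_radius M"
  by (metis spectral_radius_attained norm_ge_zero)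

lemma spectral_radius_transpose: "spectral_radius (transpose M) = spectral_radius M"
  by (simp add: spectral_radius_eq_Max complexify_transpose eigenvalues_transpose)

lemma scaled_eigenvalue_complexify_scaleR:
  assumes "l \<in> eigenvalues (complexify M)"
  shows "complex_of_real c * l \<in> eigenvalues (complexify (c *\<^sub>R M))"
proof -
  have "complexify (c *\<^sub>R M) *v v = complex_of_real c *s (complexify M *v v)" for v
    by (simp add: complexify_def matrix_vector_mult_def vec_eq_iff
        sum_distrib_left mult.assoc)
  then show ?thesis
    using assms by (auto simp: eigenvalues_def vector_smult_assoc)
qed

lemma eigenvalues_complexify_scaleR:
  assumes "c \<noteq> 0"
  shows "eigenvalues (complexify (c *\<^sub>R M)) =
    (\<lambda>l. complex_of_real c * l) ` eigenvalues (complexify M)"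
proof (intro Set.set_eqI iffI)
  fix l assume "l \<in> eigenvalues (complexify (c *\<^sub>R M))"
  then have "complex_of_real (1 / c) * l \<in> eigenvalues (complexify M)"
    using scaled_eigenvalue_complexify_scaleR[of l "c *\<^sub>R M" "1 / c"] assms by simp
  moreover have "l = complex_of_real c * (complex_of_real (1 / c) * l)"
    using assms by simp
  ultimately show "l \<in> (\<lambda>l. complex_of_real c * l) ` eigenvalues (complexify M)"
    by blast
qed (auto intro: scaled_eigenvalue_complexify_scaleR)

lemma spectral_radius_scaleR:
  assumes "c > 0"
  shows "spectral_radius (c *\<^sub>R M) = c * spectral_radius M"
proof -
  have "cmod ` eigenvalues (complexify (c *\<^sub>R M)) = (*) c ` cmod ` eigenvalues (complexify M)"
    using assms by (simp add: eigenvalues_complexify_scaleR image_image norm_mult)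
  then show ?thesis
    using assms by (simp add: spectral_radius_eq_Max mono_Max_commute[symmetric] mono_def
        finite_eigenvalues eigenvalues_nonempty)
qed

lemma bounded_matpow_if_spectral_radius_less_1:
  assumes "spectral_radius M < 1"
  obtains c where "\<And>k i j. \<bar>matpow M k $ i $ j\<bar> \<le> c"
proof -
  have "Spectral_Radius.spectral_radius (jnf_mat (complexify M)) < 1"
    using assms by (simp add: spectral_radius_eq_Max Spectral_Radius.spectral_radius_def
        eigenvalues_eq_spectrum)
  then obtain c where c: "\<And>k. norm_bound (jnf_mat (complexify M) ^\<^sub>m k) c"
    using spectral_radius_jnf_norm_bound_less_1_upper_triangular[OF jnf_mat_carrier] by blast
  have "\<bar>matpow M k $ i $ j\<bar> \<le> c" for k i j
  proof -
    have "cmod (complexify (matpow M k) $ i $ j) \<le> c"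
      using c[of k, unfolded norm_bound_def, rule_format, of "cart_position i" "cart_position j"]
      by (simp add: cart_position_less complexify_matpow jnf_mat_matpow[symmetric])
    then show ?thesis by (simp add: complexify_def)
  qed
  then show ?thesis using that by blast
qed

section \<open>Nonnegative matrices\<close>

lemma mat_nonneg_imp_nonneg: "mat_nonneg M \<Longrightarrow> 0 \<le> M"
  by (simp add: mat_nonneg_def less_eq_vec_def)

lemma mat_ge_imp_le: "mat_ge X Y \<Longrightarrow> Y \<le> X"
  by (simp add: mat_ge_def mat_nonneg_def less_eq_vec_def)

lemma matrix_mult_nonneg: "0 \<le> A \<Longrightarrow> 0 \<le> B \<Longrightarrow> 0 \<le> (A :: 'a::linordered_semiring_1^'n^'m) ** B"
  by (simp add: less_eq_vec_def matrix_matrix_mult_def sum_nonneg)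

lemma vector_matrix_mult_mono:
  "0 \<le> M \<Longrightarrow> x \<le> y \<Longrightarrow> x v* M \<le> y v* (M :: 'a::linordered_semiring_1^'n^'m)"
  by (simp add: less_eq_vec_def vector_matrix_mult_def sum_mono mult_right_mono)

lemma vector_matrix_mult_nonneg:
  "0 \<le> M \<Longrightarrow> 0 \<le> x \<Longrightarrow> 0 \<le> x v* (M :: 'a::linordered_semiring_1^'n^'m)"
  using vector_matrix_mult_mono[of M 0 x] by simp

lemma vector_matrix_mult_right_mono:
  "0 \<le> x \<Longrightarrow> M \<le> N \<Longrightarrow> x v* M \<le> x v* (N :: 'a::linordered_semiring_1^'n^'m)"
  by (simp add: less_eq_vec_def vector_matrix_mult_def sum_mono
      mult_left_mono)

lemma matrix_vector_mult_mono:
  "0 \<le> M \<Longrightarrow> x \<le> y \<Longrightarrow> M *v x \<le> (M :: 'a::linordered_semiring_1^'n^'m) *v y"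
  by (simp add: less_eq_vec_def matrix_vector_mult_def sum_mono mult_left_mono)

lemma matrix_vector_mult_nonneg:
  "0 \<le> M \<Longrightarrow> 0 \<le> x \<Longrightarrow> 0 \<le> (M :: 'a::linordered_semiring_1^'n^'m) *v x"
  using matrix_vector_mult_mono[of M 0 x] by simp

lemma vector_smult_mono: "0 \<le> c \<Longrightarrow> x \<le> y \<Longrightarrow> c *s x \<le> (c :: 'a::ordered_semiring) *s y"
  by (simp add: less_eq_vec_def mult_left_mono)

lemma norm_complexify_mult_vec_le:
  assumes "0 \<le> P"
  shows "cmod ((complexify P *v v) $ i) \<le> (P *v (\<chi> j. cmod (v $ j))) $ i"
proof -
  have "cmod ((complexify P *v v) $ i) = cmod (\<Sum>j\<in>UNIV. complex_of_real (P $ i $ j) * v $ j)"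
    by (simp add: matrix_vector_mult_def complexify_def)
  also have "\<dots> \<le> (\<Sum>j\<in>UNIV. cmod (complex_of_real (P $ i $ j) * v $ j))"
    by (rule norm_sum)
  also have "\<dots> = (P *v (\<chi> j. cmod (v $ j))) $ i"
    using assms by (simp add: less_eq_vec_def norm_mult matrix_vector_mult_def)
  finally show ?thesis .
qed

text \<open>An eigenvector \<open>v\<close> is compared with \<open>a\<close> at the coordinate where
  \<open>|v\<^sub>i| / a\<^sub>i\<close> is largest.\<close>

lemma spectral_radius_less_if_mult_less:
  fixes T :: "real^'n^'n" and a :: "real^'n"
  assumes T: "0 \<le> T" and a: "0 \<le> a" and shrink: "\<And>i. (T *v a) $ i < r * a $ i"
  shows "spectral_radius T < r"
proof -
  obtain l where l: "l \<in> eigenvalues (complexify T)" "cmod l = spectral_radius T"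
    by (rule spectral_radius_attained)
  then obtain v where v: "v \<noteq> 0" "complexify T *v v = l *s v"
    by (auto simp: eigenvalues_def)
  have a_pos: "0 < a $ i" for i
  proof -
    have "0 \<le> (T *v a) $ i"
      using matrix_vector_mult_nonneg[OF T a] by (simp add: less_eq_vec_def)
    then have "0 < r * a $ i"
      using shrink[of i] by linarith
    then show ?thesis
      using a by (auto simp: less_eq_vec_def zero_less_mult_iff dest: spec[of _ i])
  qed
  define t where "t = Max (range (\<lambda>j. cmod (v $ j) / a $ j))"
  have "t \<in> range (\<lambda>j. cmod (v $ j) / a $ j)"
    unfolding t_def by (rule Max_in) auto
  then obtain i0 where t: "t = cmod (v $ i0) / a $ i0"
    by blast
  have v_le: "cmod (v $ j) \<le> t * a $ j" for j
  proof -
    have "cmod (v $ j) / a $ j \<le> t"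
      unfolding t_def by (rule Max_ge) auto
    then show ?thesis
      using a_pos[of j] by (simp add: pos_divide_le_eq)
  qed
  obtain j where "v $ j \<noteq> 0"
    using v(1) by (auto simp: vec_eq_iff)
  then have "0 < t * a $ j"
    using v_le[of j] by (meson less_le_trans zero_less_norm_iff)
  then have "0 < t"
    using a_pos[of j] by (simp add: zero_less_mult_iff)
  have "cmod l * cmod (v $ i0) = cmod ((complexify T *v v) $ i0)"
    by (simp add: v(2) norm_mult)
  also have "\<dots> \<le> (T *v (\<chi> j. cmod (v $ j))) $ i0"
    by (rule norm_complexify_mult_vec_le[OF T])
  also have "\<dots> \<le> (T *v (t *s a)) $ i0"
    using matrix_vector_mult_mono[OF T, of "\<chi> j. cmod (v $ j)" "t *s a"] v_le
    by (simp add: less_eq_vec_def)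
  also have "\<dots> = t * (T *v a) $ i0"
    by (simp add: vector_scalar_commute)
  also have "\<dots> < t * (r * a $ i0)"
    using shrink[of i0] \<open>0 < t\<close> by simp
  also have "\<dots> = r * cmod (v $ i0)"
    using a_pos[of i0] by (simp add: t)
  finally show ?thesis
    using \<open>0 < t\<close> a_pos[of i0] l(2) by (simp add: t mult_less_cancel_right)
qed

lemma le_vector_mult_matpow:
  fixes S :: "real^'n^'n"
  assumes S: "0 \<le> S" and r: "0 \<le> r" and sub: "r *s w \<le> w v* S"
  shows "r ^ k *s w \<le> w v* matpow S k"
proof (induction k)
  case 0
  then show ?case by simp
next
  case (Suc k)
  have "r ^ Suc k *s w = r ^ k *s (r *s w)"
    by (simp add: vector_smult_assoc mult.commute)
  also have "\<dots> \<le> r ^ k *s (w v* S)"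
    by (rule vector_smult_mono) (use r sub in simp_all)
  also have "\<dots> = (r ^ k *s w) v* S"
    by (simp add: scalar_vector_matrix_assoc)
  also have "\<dots> \<le> (w v* matpow S k) v* S"
    using Suc.IH S by (rule vector_matrix_mult_mono[rotated])
  finally show ?case
    by (simp add: vector_matrix_mul_assoc)
qed

text \<open>If \<open>\<rho>(S) < r\<close>, then powers of \<open>S / \<beta>\<close> stay bounded for any
  \<open>\<beta>\<close> strictly between \<open>\<rho>(S)\<close> and \<open>r\<close>, while the hypothesis makes \<open>w S\<^sup>k / \<beta>\<^sup>k\<close> grow
  like \<open>(r / \<beta>)\<^sup>k\<close>.\<close>

lemma le_spectral_radius_if_le_vector_mult:
  fixes S :: "real^'n^'n"
  assumes S: "0 \<le> S" and w: "0 \<le> w" "w \<noteq> 0" and sub: "r *s w \<le> w v* S"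
  shows "r \<le> spectral_radius S"
proof (rule ccontr)
  let ?\<rho> = "spectral_radius S"
  assume "\<not> r \<le> ?\<rho>"
  define \<beta> where "\<beta> = (?\<rho> + r) / 2"
  have "0 < \<beta>" "?\<rho> < \<beta>" "\<beta> < r"
    using \<open>\<not> r \<le> ?\<rho>\<close> spectral_radius_nonneg[of S] by (auto simp: \<beta>_def)
  define S' where "S' = (1 / \<beta>) *\<^sub>R S"
  have "spectral_radius S' < 1"
    using \<open>0 < \<beta>\<close> \<open>?\<rho> < \<beta>\<close> by (simp add: S'_def spectral_radius_scaleR)
  then obtain c where c: "\<And>k i j. \<bar>matpow S' k $ i $ j\<bar> \<le> c"
    using bounded_matpow_if_spectral_radius_less_1 by blast
  have "(r / \<beta>) *s w = (1 / \<beta>) *s (r *s w)"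
    by (simp add: vector_smult_assoc)
  also have "\<dots> \<le> (1 / \<beta>) *s (w v* S)"
    by (rule vector_smult_mono) (use \<open>0 < \<beta>\<close> sub in simp_all)
  also have "\<dots> = w v* S'"
    by (simp add: S'_def scalar_mult_eq_scaleR vector_scaleR_matrix_ac)
  finally have "(r / \<beta>) *s w \<le> w v* S'" .
  then have grow: "(r / \<beta>) ^ k *s w \<le> w v* matpow S' k" for k
    using S \<open>0 < \<beta>\<close> \<open>\<beta> < r\<close>
    by (intro le_vector_mult_matpow) (auto simp: S'_def less_eq_vec_def)
  obtain j where "w $ j \<noteq> 0"
    using w(2) by (auto simp: vec_eq_iff)
  moreover have "0 \<le> w $ j"
    using w(1) by (simp add: less_eq_vec_def)
  ultimately have j: "0 < w $ j"
    by simp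
  have "(r / \<beta>) ^ k * w $ j \<le> c * (\<Sum>i\<in>UNIV. w $ i)" for k
  proof -
    have "(r / \<beta>) ^ k * w $ j \<le> (\<Sum>i\<in>UNIV. w $ i * matpow S' k $ i $ j)"
      using grow[of k] by (simp add: less_eq_vec_def vector_matrix_mult_def)
    also have "\<dots> \<le> (\<Sum>i\<in>UNIV. w $ i * c)"
      using w c by (intro sum_mono mult_left_mono) (auto simp: less_eq_vec_def abs_le_iff)
    finally show ?thesis
      by (simp add: sum_distrib_left mult.commute)
  qed
  moreover obtain k where "c * (\<Sum>i\<in>UNIV. w $ i) < (r / \<beta>) ^ k * w $ j"
    using real_arch_pow[of "r / \<beta>" "c * (\<Sum>i\<in>UNIV. w $ i) / w $ j"] \<open>0 < \<beta>\<close> \<open>\<beta> < r\<close> j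
    by (auto simp: pos_divide_less_eq)
  ultimately show False
    by (meson not_le)
qed

lemma spectral_radius_le_vector_mult:
  fixes S :: "real^'n^'n"
  assumes S: "0 \<le> S"
  obtains y where "0 \<le> y" "y \<noteq> 0" "spectral_radius S *s y \<le> y v* S"
proof -
  obtain l where l: "l \<in> eigenvalues (complexify (transpose S))"
    "cmod l = spectral_radius S"
    using spectral_radius_attained spectral_radius_transpose by metis
  then obtain v where v: "v \<noteq> 0" "complexify (transpose S) *v v = l *s v"
    by (auto simp: eigenvalues_def)
  define y where "y = (\<chi> j. cmod (v $ j))"
  have "0 \<le> y"
    by (simp add: y_def less_eq_vec_def)
  moreover have "y \<noteq> 0"
    using v(1) by (simp add: y_def vec_eq_iff)
  moreover have "spectral_radius S * y $ j \<le> (y v* S) $ j" for j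
  proof -
    have "spectral_radius S * y $ j = cmod ((complexify (transpose S) *v v) $ j)"
      by (simp add: v(2) l(2) y_def norm_mult)
    also have "\<dots> \<le> (transpose S *v y) $ j"
      unfolding y_def
      by (rule norm_complexify_mult_vec_le) (use S in \<open>simp add: less_eq_vec_def transpose_def\<close>)
    finally show ?thesis by simp
  qed
  ultimately show ?thesis
    using that by (simp add: less_eq_vec_def)
qed

section \<open>Comparison of the two splittings\<close>

lemma spectral_radius_less_1_if_row_sums_pos:
  fixes T :: "real^'n^'n" and P R :: "real^'m^'n"
  assumes T: "0 \<le> T" and P: "0 \<le> P" and eq: "P = R + T ** P"
    and row_sums: "\<And>i. 0 < (\<Sum>j\<in>UNIV. R $ i $ j)"
  shows "spectral_radius T < 1"
proof -
  define a where "a = P *v (\<chi> j. 1)"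
  have "0 \<le> a"
    unfolding a_def using P
    by (rule matrix_vector_mult_nonneg) (simp add: less_eq_vec_def)
  have a_eq: "a = R *v (\<chi> j. 1) + T *v a"
    unfolding a_def
    by (subst (1) eq) (simp add: matrix_vector_mult_add_rdistrib matrix_vector_mul_assoc)
  have "(T *v a) $ i < 1 * a $ i" for i
  proof -
    have "a $ i = (\<Sum>j\<in>UNIV. R $ i $ j) + (T *v a) $ i"
      by (subst (1) a_eq) (simp add: matrix_vector_mult_def[of R])
    then show ?thesis
      using row_sums[of i] by simp
  qed
  then show ?thesis
    by (rule spectral_radius_less_if_mult_less[OF T \<open>0 \<le> a\<close>])
qed

text \<open>With \<open>P = A\<^sup>\<dagger>\<close>, \<open>Q = B\<^sup>\<dagger>\<close>, \<open>R = U\<^sup>\<dagger>\<close>, a left sub-invariant vector \<open>y\<close> of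
  \<open>B\<^sup>\<dagger>C\<close> is turned into the left sub-invariant vector \<open>y A\<^sup>\<dagger>\<close> of \<open>V U\<^sup>\<dagger>\<close>.\<close>

lemma le_vector_mult_via_splittings:
  fixes P Q R :: "real^'m^'n" and C V :: "real^'n^'m"
  assumes P: "0 \<le> P" and Q: "0 \<le> Q" and RQ: "R \<le> Q"
    and P_left: "P = Q + Q ** C ** P" and P_right: "P = R + P ** V ** R"
    and y: "0 \<le> y" "y \<noteq> 0" and r: "0 < r" and sub: "r *s y \<le> y v* (Q ** C)"
  obtains z where "0 \<le> z" "z \<noteq> 0" "r *s z \<le> z v* (V ** R)"
proof -
  define b where "b = y v* Q"
  define z where "z = y v* P"
  have "0 \<le> b" "0 \<le> z"
    using y(1) P Q by (simp_all add: b_def z_def vector_matrix_mult_nonneg)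
  have "r *s z \<le> (y v* (Q ** C)) v* P"
    unfolding z_def scalar_vector_matrix_assoc[symmetric] using sub P
    by (rule vector_matrix_mult_mono[rotated])
  also have "(y v* (Q ** C)) v* P = z - b"
    unfolding z_def b_def
    by (subst (2) P_left) (simp add: vector_matrix_mult_add_rdistrib vector_matrix_mul_assoc)
  finally have z_ge: "r *s z \<le> z - b" .
  have "b \<noteq> 0"
  proof
    assume "b = 0"
    then have "r *s y \<le> 0"
      using sub by (simp add: b_def vector_matrix_mul_assoc[symmetric])
    then have "y = 0"
      using y(1) r by (simp add: less_eq_vec_def
          vec_eq_iff mult_le_0_iff order.antisym)
    with y(2) show False ..
  qed
  moreover have "b \<le> z"
  proof -
    have "0 \<le> r *s z"
      using \<open>0 \<le> z\<close> r by (simp add: less_eq_vec_def)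
    then have "b \<le> r *s z + b"
      by simp
    also have "\<dots> \<le> z"
      using z_ge by (simp add: le_diff_eq)
    finally show ?thesis .
  qed
  ultimately have "z \<noteq> 0"
    using \<open>0 \<le> b\<close> by auto
  have "z v* (V ** R) = z - y v* R"
    unfolding z_def
    by (subst (2) P_right)
      (simp add: vector_matrix_mult_add_rdistrib vector_matrix_mul_assoc matrix_mul_assoc)
  moreover have "y v* R \<le> b"
    unfolding b_def using y(1) RQ by (rule vector_matrix_mult_right_mono)
  ultimately have "z - b \<le> z v* (V ** R)"
    by simp
  with z_ge \<open>0 \<le> z\<close> \<open>z \<noteq> 0\<close> that show ?thesis
    by (meson order.trans)
qed

lemma le_vector_mult_swap:
  fixes X :: "real^'n^'m" and Y :: "real^'m^'n"
  assumes X: "0 \<le> X" and z: "0 \<le> z" "z \<noteq> 0" and r: "0 < r" and sub: "r *s z \<le> z v* (X ** Y)"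
  shows "0 \<le> z v* X" "z v* X \<noteq> 0" "r *s (z v* X) \<le> (z v* X) v* (Y ** X)"
proof -
  show "0 \<le> z v* X"
    using X z(1) by (rule vector_matrix_mult_nonneg)
  show "r *s (z v* X) \<le> (z v* X) v* (Y ** X)"
    using vector_matrix_mult_mono[OF X sub]
    by (simp add: scalar_vector_matrix_assoc vector_matrix_mul_assoc matrix_mul_assoc)
  show "z v* X \<noteq> 0"
  proof
    assume "z v* X = 0"
    then have "r *s z \<le> 0"
      using sub by (simp flip: vector_matrix_mul_assoc)
    then have "z = 0"
      using z(1) r by (simp add: less_eq_vec_def
          vec_eq_iff mult_le_0_iff order.antisym)
    with z(2) show False ..
  qed
qed

lemma spectral_radius_le_if_splitting_identities:
  fixes P Q R :: "real^'m^'n" and C V :: "real^'n^'m"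
  assumes P: "0 \<le> P" and Q: "0 \<le> Q" "0 \<le> Q ** C" and R: "0 \<le> R" "R \<le> Q"
    and V: "0 \<le> V" and P_left: "P = Q + Q ** C ** P" and P_right: "P = R + P ** V ** R"
  shows "spectral_radius (Q ** C) \<le> spectral_radius (R ** V)"
proof (cases "spectral_radius (Q ** C) = 0")
  case True
  then show ?thesis by (simp add: spectral_radius_nonneg)
next
  case False
  then have r: "0 < spectral_radius (Q ** C)"
    using spectral_radius_nonneg[of "Q ** C"] by simp
  obtain y where y: "0 \<le> y" "y \<noteq> 0" "spectral_radius (Q ** C) *s y \<le> y v* (Q ** C)"
    using spectral_radius_le_vector_mult[OF Q(2)] .
  obtain z where z: "0 \<le> z" "z \<noteq> 0" "spectral_radius (Q ** C) *s z \<le> z v* (V ** R)"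
    using P Q(1) R(2) P_left P_right y(1,2) r y(3) by (rule le_vector_mult_via_splittings)
  show ?thesis
    using matrix_mult_nonneg[OF R(1) V]
    by (rule le_spectral_radius_if_le_vector_mult[OF _ le_vector_mult_swap[OF V z(1,2) r z(3)]])
qed

theorem theorem3p10:
  fixes A B C U V :: "real^'n^'m"
  assumes "mat_nonneg (moore_penrose A)"
    and "proper_weak_regular_splitting A B C"
    and "proper_regular_splitting A U V"
    and "mat_ge (moore_penrose B) (moore_penrose U)"
    and "\<forall>i. (\<Sum>j\<in>UNIV. (moore_penrose U)$i$j) > 0"
  shows "spectral_radius (moore_penrose B ** C) \<le> spectral_radius (moore_penrose U ** V)
       \<and> spectral_radius (moore_penrose U ** V) < 1"
proof
  have A: "0 \<le> moore_penrose A"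
    using assms(1) by (rule mat_nonneg_imp_nonneg)
  have B: "proper_splitting A B C" "0 \<le> moore_penrose B" "0 \<le> moore_penrose B ** C"
    using assms(2) by (simp_all add: proper_weak_regular_splitting_def mat_nonneg_imp_nonneg)
  have U: "proper_splitting A U V" "0 \<le> moore_penrose U" "0 \<le> V"
    using assms(3) by (simp_all add: proper_regular_splitting_def mat_nonneg_imp_nonneg)
  show "spectral_radius (moore_penrose U ** V) < 1"
    using spectral_radius_less_1_if_row_sums_pos[OF matrix_mult_nonneg[OF U(2,3)] A
        proper_splitting_moore_penrose_eq_left[OF U(1)]] assms(5)
    by blast
  show "spectral_radius (moore_penrose B ** C) \<le> spectral_radius (moore_penrose U ** V)"
    using A B(2,3) U(2) mat_ge_imp_le[OF assms(4)] U(3)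
      proper_splitting_moore_penrose_eq_left[OF B(1)]
      proper_splitting_moore_penrose_eq_right[OF U(1)]
    by (rule spectral_radius_le_if_splitting_identities)
qed

end
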